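(* Let $\alpha\ge\tfrac12$. Define $g_1=\frac1{\omega_1}\mathbf{1}_{[0,1)}*_\alpha\mathbf{1}_{[0,2]}$ and, for $n\ge2$, $g_n=\frac1{\omega_1}\mathbf{1}_{[0,1)}*_\alpha\mathbf{1}_{[n-2,n+1]}$. Then for every $n\ge1$, $g_n(x)=1$ for all $x\in[n-1,n)$.
   Context: Fix $\alpha\geq\tfrac12$. The Bessel–Kingman hypergroup is $(\mathbb{R}_+,*_\alpha)$ with Haar measure $\omega_\alpha(dz)=z^{2\alpha+1}dz$ and, for $x,y>0$, $\varepsilon_x*_\alpha\varepsilon_y(f)=\int_{|x-y|}^{x+y}K_\alpha(x,y,z)f(z)z^{2\alpha+1}dz$ with $K_\alpha(x,y,z)=C_\Gamma\frac{[(z^2-(x-y)^2)((x+y)^2-z^2)]^{\alpha-1/2}}{(xyz)^{2\alpha}}$, $C_\Gamma=\frac{\Gamma(\alpha+1)}{\Gamma(1/2)\Gamma(\alpha+1/2)2^{2\alpha-1}}$; $\varepsilon_0$ is the identity; $\varepsilon_x*_\alpha\varepsilon_y$ is a probability measure. Translation: $\tau_xf(y)=\varepsilon_x*_\alpha\varepsilon_y(f)$; convolution of functions: $f_1*_\alpha f_2(x)=\int_{\mathbb{R}_+}f_1(y)\,\tau_xf_2(y)\,d\omega_\alpha(y)$. $\omega_1=\omega_\alpha([0,1))$. *)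

theory Defs
  imports "HOL-Analysis.Analysis"
begin

text \<open>Bessel--Kingman hypergroup on R_+ = {0..} with parameter alpha.
  Functions are represented as real-valued functions on the reals; only their values on {0..} matter.\<close>

definition BK_const :: "real \<Rightarrow> real" where
  "BK_const \<alpha> = Gamma (\<alpha> + 1) / (Gamma (1/2) * Gamma (\<alpha> + 1/2) * 2 powr (2*\<alpha> - 1))"

definition BK_kernel :: "real \<Rightarrow> real \<Rightarrow> real \<Rightarrow> real \<Rightarrow> real" where
  "BK_kernel \<alpha> x y z =
     BK_const \<alpha> * ((z\<^sup>2 - (x - y)\<^sup>2) * ((x + y)\<^sup>2 - z\<^sup>2)) powr (\<alpha> - 1/2) / (x * y * z) powr (2*\<alpha>)"

text \<open>Generalized translation: tau_x f (y) = (eps_x * eps_y)(f); eps_0 is the identity.\<close>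
definition BK_transl :: "real \<Rightarrow> real \<Rightarrow> (real \<Rightarrow> real) \<Rightarrow> real \<Rightarrow> real" where
  "BK_transl \<alpha> x f y =
     (if x = 0 then f y
      else if y = 0 then f x
      else set_lebesgue_integral lborel {\<bar>x - y\<bar>..x + y}
             (\<lambda>z. BK_kernel \<alpha> x y z * f z * z powr (2*\<alpha> + 1)))"

text \<open>Convolution of functions w.r.t. Haar measure omega_alpha(dz) = z^(2 alpha+1) dz on R_+.\<close>
definition BK_conv :: "real \<Rightarrow> (real \<Rightarrow> real) \<Rightarrow> (real \<Rightarrow> real) \<Rightarrow> real \<Rightarrow> real" where
  "BK_conv \<alpha> f1 f2 x =
     set_lebesgue_integral lborel {0..} (\<lambda>y. f1 y * BK_transl \<alpha> x f2 y * y powr (2*\<alpha> + 1))"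

definition BK_omega1 :: "real \<Rightarrow> real" where
  "BK_omega1 \<alpha> = set_lebesgue_integral lborel {0..<1} (\<lambda>y. y powr (2*\<alpha> + 1))"

definition BK_g :: "real \<Rightarrow> nat \<Rightarrow> real \<Rightarrow> real" where
  "BK_g \<alpha> n =
     BK_conv \<alpha> (\<lambda>y. indicator {0..<1} y / BK_omega1 \<alpha>)
       (if n = 1 then indicator {0..2} else indicator {real n - 2..real n + 1})"

end

theory Submission
  imports Defs
begin

text \<open>For \<open>y \<in> [0,1)\<close> the translated measure \<open>\<epsilon>\<^sub>x *\<^sub>\<alpha> \<epsilon>\<^sub>y\<close> is a probability measure
  supported on \<open>[|x - y|, x + y] \<subseteq> (x - 1, x + 1)\<close>, and for \<open>x \<in> [n - 1, n)\<close> the indicator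
  defining \<open>g\<^sub>n\<close> equals 1 on \<open>(x - 1, x + 1) \<inter> [0,\<infinity>)\<close>. Hence \<open>\<tau>\<^sub>x\<close> of that indicator is 1 on
  \<open>[0,1)\<close>, and \<open>g\<^sub>n(x)\<close> is the \<open>\<omega>\<^sub>\<alpha>\<close>-average of the constant 1 over \<open>[0,1)\<close>.
  That the kernel has total mass 1 follows from the substitution \<open>z\<^sup>2 = |x - y|\<^sup>2 + 4xyt\<close>,
  which turns its integral into a Beta integral, and Legendre's duplication formula.\<close>

lemma Gamma_legendre_duplication_real:
  fixes a :: real
  assumes "a > 0"
  shows "Gamma a * Gamma (a + 1/2) = 2 powr (1 - 2*a) * sqrt pi * Gamma (2*a)"
proof -
  have a_not_nonpos: "complex_of_real a \<notin> \<int>\<^sub>\<le>\<^sub>0"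
    using assms nonpos_Ints_nonpos[of a] by (simp only: of_real_in_nonpos_Ints_iff) linarith
  have cast_shift: "complex_of_real a + 1/2 = complex_of_real (a + 1/2)" by simp
  have cast_double: "2 * complex_of_real a = complex_of_real (2*a)" by simp
  have cast_exponent: "(1 - complex_of_real (2*a)) * of_real (ln 2) = complex_of_real ((1-2*a) * ln 2)" by simp
  have shifted_not_nonpos: "complex_of_real a + 1/2 \<notin> \<int>\<^sub>\<le>\<^sub>0"
    unfolding cast_shift using assms nonpos_Ints_nonpos[of "a+1/2"] by (simp only: of_real_in_nonpos_Ints_iff) linarith
  have "Gamma (complex_of_real a) * Gamma (complex_of_real a + 1/2) =
        exp ((1 - 2*complex_of_real a) * of_real (ln 2)) * of_real (sqrt pi) * Gamma (2*complex_of_real a)"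
    by (rule Gamma_legendre_duplication[OF a_not_nonpos shifted_not_nonpos])
  hence "complex_of_real (Gamma a) * complex_of_real (Gamma (a+1/2)) =
        complex_of_real (exp ((1-2*a) * ln 2)) * of_real (sqrt pi) * complex_of_real (Gamma (2*a))"
    unfolding cast_shift cast_double cast_exponent Gamma_complex_of_real exp_of_real .
  hence "complex_of_real (Gamma a * Gamma (a + 1/2)) = complex_of_real (exp ((1-2*a) * ln 2) * sqrt pi * Gamma (2*a))"
    by simp
  hence "Gamma a * Gamma (a + 1/2) = exp ((1-2*a) * ln 2) * sqrt pi * Gamma (2*a)"
    by (simp only: of_real_eq_iff)
  thus ?thesis by (simp add: powr_def)
qed

lemma BK_const_normalization:
  fixes \<alpha> :: real
  assumes "\<alpha> > -1/2"
  shows "BK_const \<alpha> * 4 powr (2*\<alpha>) / 2 * Beta (\<alpha> + 1/2) (\<alpha> + 1/2) = 1"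
proof -
  define p where "p = 2 powr (2*\<alpha>)"
  have p: "p > 0" by (simp add: p_def)
  have args: "\<alpha> + 1/2 + 1/2 = \<alpha> + 1" "1 - 2*(\<alpha> + 1/2) = -(2*\<alpha>)" "2*(\<alpha> + 1/2) = 2*\<alpha> + 1"
    by simp_all
  have inverse_p: "2 powr -(2*\<alpha>) = 1 / p" by (simp add: p_def powr_minus_divide)
  have duplication: "Gamma (\<alpha> + 1/2) * Gamma (\<alpha> + 1) = sqrt pi * Gamma (2*\<alpha> + 1) / p"
    using Gamma_legendre_duplication_real[of "\<alpha> + 1/2"] assms unfolding args by (simp add: inverse_p)
  have four: "(4::real) powr (2*\<alpha>) = p * p"
    using powr_mult[of 2 2 "2*\<alpha>"] by (simp add: p_def)
  have half: "2 powr (2*\<alpha> - 1) = p / 2" by (simp add: p_def powr_diff)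
  have sum: "\<alpha> + 1/2 + (\<alpha> + 1/2) = 2*\<alpha> + 1" by simp
  have pos: "Gamma (\<alpha> + 1/2) > 0" "Gamma (2*\<alpha> + 1) > 0" using assms by auto
  have "BK_const \<alpha> * 4 powr (2*\<alpha>) / 2 * Beta (\<alpha> + 1/2) (\<alpha> + 1/2)
      = Gamma (\<alpha> + 1/2) * Gamma (\<alpha> + 1) * p / (sqrt pi * Gamma (2*\<alpha> + 1))"
    unfolding BK_const_def Beta_def Gamma_one_half_real four half sum
    using p pos by (simp add: field_simps)
  also have "\<dots> = 1" using p pos by (simp add: duplication)
  finally show ?thesis .
qed

lemma has_integral_Beta_squares:
  fixes a b \<beta> :: real
  assumes a: "0 \<le> a" and ab: "a < b" and \<beta>: "\<beta> \<ge> 0"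
  shows "((\<lambda>z. z * ((z\<^sup>2 - a\<^sup>2) * (b\<^sup>2 - z\<^sup>2)) powr \<beta>) has_integral
           (b\<^sup>2 - a\<^sup>2) powr (2*\<beta> + 1) / 2 * Beta (\<beta> + 1) (\<beta> + 1)) {a..b}"
proof -
  define D where "D = b\<^sup>2 - a\<^sup>2"
  define P where "P = (\<lambda>z::real. (z\<^sup>2 - a\<^sup>2) * (b\<^sup>2 - z\<^sup>2))"
  \<comment> \<open>Since \<open>0 powr 0 = 0\<close>, the integrand is discontinuous at the endpoints when \<open>\<beta> = 0\<close>;
      the substitution rule is applied to this continuous modification.\<close>
  define f where "f = (\<lambda>z. z * (if \<beta> = 0 then 1 else P z powr \<beta>))"
  define g where "g = (\<lambda>t::real. sqrt (a\<^sup>2 + D * t))"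
  define g' where "g' = (\<lambda>t::real. D / (2 * sqrt (a\<^sup>2 + D * t)))"
  define c where "c = D powr (2*\<beta> + 1) / 2"
  have D: "D > 0" using a ab by (simp add: D_def power_strict_mono)
  have b: "b > 0" using a ab by simp
  have P_nonneg: "P z \<ge> 0" if "z \<in> {a..b}" for z
    using that a by (auto simp: P_def intro!: mult_nonneg_nonneg power_mono)
  have f_cont: "continuous_on {a..b} f"
  proof (cases "\<beta> = 0")
    case False
    have "continuous_on {a..b} (\<lambda>z. P z powr \<beta>)"
      by (rule continuous_on_powr') (use P_nonneg False \<beta> in \<open>auto simp: P_def intro!: continuous_intros\<close>)
    thus ?thesis unfolding f_def using False by (auto intro!: continuous_intros)
  qed (simp add: f_def continuous_on_id)
  have g_ends: "g 0 = a" "g 1 = b" using a b by (simp_all add: g_def D_def)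
  have g_range: "g ` {0..1} \<subseteq> {a..b}"
  proof
    fix u assume "u \<in> g ` {0..1}"
    then obtain t where t: "t \<in> {0..1}" "u = g t" by auto
    have "sqrt (a\<^sup>2) \<le> sqrt (a\<^sup>2 + D*t)" using t D by (intro real_sqrt_le_mono) simp
    moreover have "D*t \<le> D" using t D by (simp add: mult_left_le)
    hence "sqrt (a\<^sup>2 + D*t) \<le> sqrt (b\<^sup>2)" by (intro real_sqrt_le_mono) (simp add: D_def)
    ultimately show "u \<in> {a..b}" using t a b by (simp add: g_def)
  qed
  have g_deriv: "(g has_field_derivative g' t) (at t within {0..1})" if "t \<in> {0..1} - {0,1}" for t
  proof -
    have "a\<^sup>2 + D*t > 0" using that D by (simp add: add_nonneg_pos)
    thus ?thesis unfolding g_def g'_def by (auto intro!: derivative_eq_intros simp: field_simps)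
  qed
  have "((\<lambda>t. g' t *\<^sub>R f (g t)) has_integral (integral {g 0..g 1} f - integral {g 1..g 0} f)) {0..1}"
    by (rule has_integral_substitution_general[of "{0,1}"])
       (use g_range f_cont g_deriv in \<open>auto simp: g_def intro!: continuous_intros\<close>)
  hence subst: "((\<lambda>t. g' t * f (g t)) has_integral integral {a..b} f) {0..1}"
    using ab unfolding g_ends by simp
  have pulled_back: "g' t * f (g t) = c * (t powr (\<beta> + 1 - 1) * (1 - t) powr (\<beta> + 1 - 1))"
    if "t \<in> {0..1} - {0,1}" for t
  proof -
    have t: "0 < t" "t < 1" using that by auto
    have pos: "a\<^sup>2 + D*t > 0" using t D by (simp add: add_nonneg_pos)
    have g_sq: "(g t)\<^sup>2 = a\<^sup>2 + D*t" using pos by (simp add: g_def)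
    have P_g: "P (g t) = D\<^sup>2 * (t * (1 - t))"
      unfolding P_def g_sq by (simp add: D_def algebra_simps power2_eq_square)
    have "g' t * g t = D / 2" using pos by (simp add: g_def g'_def field_simps)
    moreover have "(if \<beta> = 0 then 1 else P (g t) powr \<beta>) = D powr (2*\<beta>) * (t powr \<beta> * (1 - t) powr \<beta>)"
    proof -
      have "D\<^sup>2 = D powr 2" using D by (simp add: powr_numeral)
      hence "(D\<^sup>2) powr \<beta> = D powr (2*\<beta>)" by (simp add: powr_powr)
      thus ?thesis using t D by (simp add: P_g powr_mult)
    qed
    ultimately have "g' t * f (g t) = D / 2 * (D powr (2*\<beta>) * (t powr \<beta> * (1 - t) powr \<beta>))"
      by (simp add: f_def)
    also have "\<dots> = c * (t powr \<beta> * (1 - t) powr \<beta>)"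
      using D by (simp add: c_def powr_add)
    finally show ?thesis by simp
  qed
  have "((\<lambda>t. c * (t powr (\<beta> + 1 - 1) * (1 - t) powr (\<beta> + 1 - 1))) has_integral c * Beta (\<beta> + 1) (\<beta> + 1)) {0..1}"
    by (intro has_integral_mult_right has_integral_Beta_real) (use \<beta> in auto)
  hence "((\<lambda>t. g' t * f (g t)) has_integral c * Beta (\<beta> + 1) (\<beta> + 1)) {0..1}"
    by (rule has_integral_spike_finite[of "{0,1}", rotated 2]) (use pulled_back in auto)
  hence "integral {a..b} f = c * Beta (\<beta> + 1) (\<beta> + 1)"
    using subst by (rule has_integral_unique[symmetric])
  hence "(f has_integral c * Beta (\<beta> + 1) (\<beta> + 1)) {a..b}"
    using integrable_continuous_interval[OF f_cont] by (simp add: has_integral_integral)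
  thus ?thesis unfolding c_def D_def
    by (rule has_integral_spike_finite[of "{a,b}", rotated 2]) (use a in \<open>auto simp: f_def P_def power2_eq_iff_nonneg\<close>)
qed

lemma BK_kernel_has_integral:
  fixes \<alpha> x y :: real
  assumes \<alpha>: "\<alpha> \<ge> 1/2" and x: "x > 0" and y: "y > 0"
  shows "((\<lambda>z. BK_kernel \<alpha> x y z * z powr (2*\<alpha> + 1)) has_integral 1) {\<bar>x - y\<bar>..x + y}"
proof -
  define a where "a = \<bar>x - y\<bar>"
  define b where "b = x + y"
  define K where "K = BK_const \<alpha> / (x*y) powr (2*\<alpha>)"
  define h where "h = (\<lambda>z. z * ((z\<^sup>2 - a\<^sup>2) * (b\<^sup>2 - z\<^sup>2)) powr (\<alpha> - 1/2))"
  have ab: "0 \<le> a" "a < b" using x y by (auto simp: a_def b_def)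
  have gap: "b\<^sup>2 - a\<^sup>2 = 4 * (x*y)" by (simp add: a_def b_def power2_eq_square algebra_simps)
  have exps: "2*(\<alpha> - 1/2) + 1 = 2*\<alpha>" "\<alpha> - 1/2 + 1 = \<alpha> + 1/2" by simp_all
  have "(h has_integral (4 * (x*y)) powr (2*\<alpha>) / 2 * Beta (\<alpha> + 1/2) (\<alpha> + 1/2)) {a..b}"
    unfolding h_def by (rule has_integral_Beta_squares[OF ab, of "\<alpha> - 1/2", unfolded exps gap]) (use \<alpha> in simp)
  hence "((\<lambda>z. K * h z) has_integral K * ((4 * (x*y)) powr (2*\<alpha>) / 2 * Beta (\<alpha> + 1/2) (\<alpha> + 1/2))) {a..b}"
    by (rule has_integral_mult_right)
  also have "K * ((4 * (x*y)) powr (2*\<alpha>) / 2 * Beta (\<alpha> + 1/2) (\<alpha> + 1/2)) = 1"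
  proof -
    have "(4 * (x*y)) powr (2*\<alpha>) = 4 powr (2*\<alpha>) * (x*y) powr (2*\<alpha>)" using x y by (simp add: powr_mult)
    moreover have "(x*y) powr (2*\<alpha>) > 0" using x y by simp
    ultimately show ?thesis
      using BK_const_normalization[of \<alpha>] \<alpha> by (simp add: K_def)
  qed
  finally have K_h: "((\<lambda>z. K * h z) has_integral 1) {a..b}" .
  have interior: "BK_kernel \<alpha> x y z * z powr (2*\<alpha> + 1) = K * h z" if "z \<in> {a..b} - {a, b}" for z
  proof -
    have z: "z > 0" using that ab by auto
    have kernel: "BK_kernel \<alpha> x y z = BK_const \<alpha> * ((z\<^sup>2 - a\<^sup>2) * (b\<^sup>2 - z\<^sup>2)) powr (\<alpha> - 1/2)
                               / ((x*y) powr (2*\<alpha>) * z powr (2*\<alpha>))"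
      using x y z by (simp add: BK_kernel_def a_def b_def powr_mult)
    have weight: "z powr (2*\<alpha> + 1) = z powr (2*\<alpha>) * z" using z by (simp add: powr_add)
    have cancel: "c * q / (X * Z) * (Z * w) = c / X * (w * q)" if "X > 0" "Z > 0" for c q X Z w :: real
      using that by (simp add: field_simps)
    show ?thesis
      unfolding kernel weight K_def h_def by (rule cancel) (use x y z in simp_all)
  qed
  have "((\<lambda>z. BK_kernel \<alpha> x y z * z powr (2*\<alpha> + 1)) has_integral 1) {a..b}"
    by (rule has_integral_spike_finite[of "{a, b}", OF _ interior K_h]) simp
  thus ?thesis by (simp only: a_def b_def)
qed

lemma set_borel_integral_eq_has_integral_nonneg:
  fixes f :: "real \<Rightarrow> real"
  assumes "(f has_integral I) S" "\<And>x. x \<in> S \<Longrightarrow> 0 \<le> f x" "set_borel_measurable lborel S f"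
  shows "set_lebesgue_integral lborel S f = I"
proof -
  have "f absolutely_integrable_on S"
    using assms(1,2) by (intro nonnegative_absolutely_integrable_1) auto
  hence "set_integrable lborel S f"
    using integrable_completion[OF assms(3)[unfolded set_borel_measurable_def]]
    unfolding set_integrable_def by simp
  thus ?thesis
    using assms(1) set_borel_integral_eq_integral(2) integral_unique by metis
qed

lemma BK_kernel_set_integral:
  fixes \<alpha> x y :: real
  assumes "\<alpha> \<ge> 1/2" and "x > 0" and "y > 0"
  shows "set_lebesgue_integral lborel {\<bar>x - y\<bar>..x + y} (\<lambda>z. BK_kernel \<alpha> x y z * z powr (2*\<alpha> + 1)) = 1"
proof (rule set_borel_integral_eq_has_integral_nonneg)
  have "BK_const \<alpha> \<ge> 0" using assms(1) by (simp add: BK_const_def)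
  thus "0 \<le> BK_kernel \<alpha> x y z * z powr (2*\<alpha> + 1)" for z by (simp add: BK_kernel_def)
qed (use BK_kernel_has_integral[OF assms] in \<open>auto simp: set_borel_measurable_def BK_kernel_def\<close>)

lemma BK_transl_eq_1:
  fixes \<alpha> x y :: real and F :: "real \<Rightarrow> real"
  assumes "\<alpha> \<ge> 1/2" and "x \<ge> 0" and "y \<ge> 0"
    and F: "\<And>z. z \<in> {\<bar>x - y\<bar>..x + y} \<Longrightarrow> F z = 1"
  shows "BK_transl \<alpha> x F y = 1"
proof -
  consider "x = 0" | "y = 0" | "x > 0" "y > 0" using assms(2,3) by fastforce
  thus ?thesis
  proof cases
    case 3
    have "set_lebesgue_integral lborel {\<bar>x - y\<bar>..x + y} (\<lambda>z. BK_kernel \<alpha> x y z * F z * z powr (2*\<alpha> + 1))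
        = set_lebesgue_integral lborel {\<bar>x - y\<bar>..x + y} (\<lambda>z. BK_kernel \<alpha> x y z * z powr (2*\<alpha> + 1))"
      by (rule set_lebesgue_integral_cong) (simp_all add: F)
    thus ?thesis using 3 BK_kernel_set_integral[OF assms(1) 3] by (simp add: BK_transl_def)
  qed (use assms F in \<open>auto simp: BK_transl_def\<close>)
qed

lemma BK_omega1_eq:
  fixes \<alpha> :: real
  assumes "\<alpha> > -1"
  shows "BK_omega1 \<alpha> = 1 / (2*\<alpha> + 2)"
proof -
  let ?w = "\<lambda>y::real. y powr (2*\<alpha> + 1)"
  have on_Icc: "(?w has_integral 1 / (2*\<alpha> + 2)) {0..1}"
    using has_integral_powr_from_0[of "2*\<alpha> + 1" 1] assms by (simp add: add.assoc)
  have "negligible {y \<in> {0..<1} - {0..1}. ?w y \<noteq> 0}"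
    by (rule negligible_subset[of "{}"]) auto
  moreover have "negligible {y \<in> {0..1} - {0..<1}. ?w y \<noteq> 0}"
    by (rule negligible_subset[of "{1}"]) auto
  ultimately have "(?w has_integral 1 / (2*\<alpha> + 2)) {0..<1}"
    using on_Icc has_integral_spike_set_eq[where S="{0..<1}" and T="{0..1}" and f="?w"] by blast
  thus ?thesis
    unfolding BK_omega1_def
    by (rule set_borel_integral_eq_has_integral_nonneg) (auto simp: set_borel_measurable_def)
qed

lemma BK_conv_normalized_indicator:
  fixes \<alpha> x :: real and F :: "real \<Rightarrow> real"
  assumes "BK_omega1 \<alpha> \<noteq> 0" and "\<And>y. y \<in> {0..<1} \<Longrightarrow> BK_transl \<alpha> x F y = 1"
  shows "BK_conv \<alpha> (\<lambda>y. indicator {0..<1} y / BK_omega1 \<alpha>) F x = 1"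
proof -
  have "BK_conv \<alpha> (\<lambda>y. indicator {0..<1} y / BK_omega1 \<alpha>) F x
      = set_lebesgue_integral lborel {0..} (\<lambda>y. indicator {0..<1} y * (y powr (2*\<alpha> + 1) / BK_omega1 \<alpha>))"
    unfolding BK_conv_def by (rule set_lebesgue_integral_cong) (auto simp: assms(2) indicator_def)
  also have "\<dots> = set_lebesgue_integral lborel {0..<1} (\<lambda>y. y powr (2*\<alpha> + 1)) / BK_omega1 \<alpha>"
    unfolding set_lebesgue_integral_def
    by (subst integral_divide_zero [symmetric], rule Bochner_Integration.integral_cong)
       (auto simp: indicator_def)
  also have "\<dots> = 1" using assms(1) by (simp add: BK_omega1_def)
  finally show ?thesis .
qed

theorem mainTheorem11:
  fixes \<alpha> :: real and n :: nat and x :: real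
  assumes "\<alpha> \<ge> 1/2" and "n \<ge> 1" and "real n - 1 \<le> x" and "x < real n"
  shows "BK_g \<alpha> n x = 1"
  unfolding BK_g_def
proof (rule BK_conv_normalized_indicator)
  show "BK_omega1 \<alpha> \<noteq> 0" using assms(1) by (simp add: BK_omega1_eq)
  fix y :: real assume y: "y \<in> {0..<1}"
  show "BK_transl \<alpha> x (if n = 1 then indicator {0..2} else indicator {real n - 2..real n + 1}) y = 1"
    by (rule BK_transl_eq_1) (use assms y in \<open>auto simp: indicator_def\<close>)
qed

end
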